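(* Assume the parametrized family $\mathcal F^t$, $t\in\Omega$, satisfies the GTC with respect to a locally finite Borel measure $\eta$ on $\Omega$, with associated $\delta_0$ and $\psi$. Let $s\in(0,d)$ be non-integral, $t_0\in\Omega$ and $0<\delta<\delta_0$. Then there exists $c>0$ (depending on $s$, $\delta$ and $t_0$) such that for all distinct ${\bf i},{\bf j}\in\Sigma$, $$\int_{B(t_0,\delta)}|\Pi^t({\bf i})-\Pi^t({\bf j})|^{-s}\,d\eta(t)\le c\,e^{|{\bf i}\wedge{\bf j}|\psi(\delta)}\Big(\max_{x\in\Sigma}\phi^s\big(D_{\Pi^{t_0}x}f^{t_0}_{{\bf i}\wedge{\bf j}}\big)\Big)^{-1}.$$
   Context: $\Sigma=\{1,\dots,\ell\}^{\mathbb N}$; ${\bf i}\wedge{\bf j}$ the longest common initial word of distinct ${\bf i},{\bf j}$, $|{\bf i}\wedge{\bf j}|$ its length. Singular value function $\phi^s(T)=\alpha_1\cdots\alpha_k\alpha_{k+1}^{s-k}$ for $0\le s<d$, $k=\lfloor s\rfloor$ ($\alpha_1\ge\dots\ge\alpha_d$ singular values), $\phi^s(T)=|\det T|^{s/d}$ for $s\ge d$. Parametrized family: $(\Omega,\rho)$ separable metric space; for each $t$, $\mathcal F^t=\{f^t_i\}_{i=1}^\ell$ is a $C^1$ IFS on a common compact $Z\subset\mathbb R^d$ (maps extending on an open $U\supset Z$ to $C^1$ diffeomorphisms into $U$ with $\sup_U\|Df^t_i\|<1$); common Lipschitz constant $\theta\in(0,1)$ on $Z$ and $t\mapsto f^t_i(x)$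 continuous. $f^t_I=f^t_{i_1}\circ\cdots\circ f^t_{i_n}$, $f^t_\varepsilon=\mathrm{id}$; coding map $\Pi^t({\bf i})=\lim_nf^t_{{\bf i}|n}(z)$. $Z^t_{\bf i}(r)=\inf_{x\in\Sigma}\min_{0\le k\le d}r^k/\phi^k(D_{\Pi^tx}f^t_{\bf i})$. GTC w.r.t. $\eta$: there are $\delta_0>0$ and $\psi:(0,\delta_0)\to[0,\infty)$ with $\psi(\delta)\to0$ such that for every $t_0$ and $0<\delta<\delta_0$ there is $C(t_0,\delta)>0$ with $\eta\{t\in B(t_0,\delta):|\Pi^t({\bf i})-\Pi^t({\bf j})|<r\}\le Ce^{|{\bf i}\wedge{\bf j}|\psi(\delta)}Z^{t_0}_{{\bf i}\wedge{\bf j}}(r)$ for all distinct ${\bf i},{\bf j}$, $r>0$; $B(t_0,\delta)$ the closed ball. *)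

theory Defs
  imports "HOL-Analysis.Analysis" "HOL-Computational_Algebra.Polynomial" "HOL-Library.Multiset"
begin

definition charpoly_mat :: "real^'n^'n \<Rightarrow> real poly" where
  "charpoly_mat A = det (\<chi> i j. (if i = j then [:0, 1:] else 0) - [:A $ i $ j:])"

text \<open>Singular values of A, in non-increasing order: square roots of the eigenvalues
  (with multiplicity) of A^T A.  sv A k is the k-th singular value, k = 1..d.\<close>
definition singular_values :: "real^'n^'n \<Rightarrow> real list" where
  "singular_values A =
     map sqrt (rev (sorted_list_of_multiset (proots (charpoly_mat (transpose A ** A)))))"

definition sv :: "real^'n^'n \<Rightarrow> nat \<Rightarrow> real" where
  "sv A k = singular_values A ! (k - 1)"

definition svf :: "real \<Rightarrow> real^'n^'n \<Rightarrow> real" where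
  "svf s A =
    (if s < real CARD('n) then
       (let k = nat \<lfloor>s\<rfloor> in
          (\<Prod>m\<in>{1..k}. sv A m) * (if s = real k then 1 else sv A (k + 1) powr (s - real k)))
     else \<bar>det A\<bar> powr (s / real CARD('n)))"

text \<open>Sigma = sequences over the finite alphabet 'a (type nat => 'a);
  finite words are lists.\<close>

definition prefix_seq :: "(nat \<Rightarrow> 'a) \<Rightarrow> nat \<Rightarrow> 'a list" where
  "prefix_seq i n = map i [0..<n]"

text \<open>Length |i wedge j| of the longest common initial word of distinct i, j.\<close>
definition common_len :: "(nat \<Rightarrow> 'a) \<Rightarrow> (nat \<Rightarrow> 'a) \<Rightarrow> nat" where
  "common_len i j = (LEAST n. i n \<noteq> j n)"

definition common_word :: "(nat \<Rightarrow> 'a) \<Rightarrow> (nat \<Rightarrow> 'a) \<Rightarrow> 'a list" where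
  "common_word i j = prefix_seq i (common_len i j)"

definition word_map :: "('o \<Rightarrow> 'a \<Rightarrow> 'x \<Rightarrow> 'x) \<Rightarrow> 'o \<Rightarrow> 'a list \<Rightarrow> 'x \<Rightarrow> 'x" where
  "word_map f t I = foldr (\<lambda>a g. f t a \<circ> g) I id"

definition coding :: "('o \<Rightarrow> 'a \<Rightarrow> 'x \<Rightarrow> 'x::metric_space) \<Rightarrow> 'x set \<Rightarrow> 'o \<Rightarrow> (nat \<Rightarrow> 'a) \<Rightarrow> 'x" where
  "coding f Z t i = lim (\<lambda>n. word_map f t (prefix_seq i n) (SOME z. z \<in> Z))"

definition Dmat :: "('o \<Rightarrow> 'a \<Rightarrow> real^'n \<Rightarrow> real^'n) \<Rightarrow> (real^'n) set \<Rightarrow> 'o \<Rightarrow> 'a list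
     \<Rightarrow> (nat \<Rightarrow> 'a) \<Rightarrow> real^'n^'n" where
  "Dmat f Z t I x = matrix (frechet_derivative (word_map f t I) (at (coding f Z t x)))"

definition Zfun :: "('o \<Rightarrow> 'a \<Rightarrow> real^'n \<Rightarrow> real^'n) \<Rightarrow> (real^'n) set \<Rightarrow> 'o \<Rightarrow> 'a list
     \<Rightarrow> real \<Rightarrow> real" where
  "Zfun f Z t I r = (INF x \<in> UNIV. Min ((\<lambda>k. r ^ k / svf (real k) (Dmat f Z t I x)) ` {0..CARD('n)}))"

definition C1_diffeo_into :: "(real^'n) set \<Rightarrow> (real^'n \<Rightarrow> real^'n) \<Rightarrow> bool" where
  "C1_diffeo_into U g \<longleftrightarrow>
     open U \<and> g ` U \<subseteq> U \<and> inj_on g U \<and> open (g ` U) \<and>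
     (\<exists>g'. (\<forall>x\<in>U. (g has_derivative g' x) (at x)) \<and> continuous_on U (\<lambda>x. matrix (g' x))) \<and>
     (\<exists>h h'. (\<forall>x\<in>U. h (g x) = x) \<and>
        (\<forall>y\<in>g ` U. (h has_derivative h' y) (at y)) \<and> continuous_on (g ` U) (\<lambda>y. matrix (h' y)))"

definition param_C1_IFS :: "('o::metric_space \<Rightarrow> 'a::finite \<Rightarrow> real^'n \<Rightarrow> real^'n) \<Rightarrow> (real^'n) set
     \<Rightarrow> (real^'n) set \<Rightarrow> real \<Rightarrow> bool" where
  "param_C1_IFS f Z U \<theta> \<longleftrightarrow>
     separable_space (euclidean :: 'o topology) \<and>
     compact Z \<and> Z \<noteq> {} \<and> open U \<and> Z \<subseteq> U \<and> 0 < \<theta> \<and> \<theta> < 1 \<and>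
     (\<forall>t i. f t i ` Z \<subseteq> Z) \<and>
     (\<forall>t i. C1_diffeo_into U (f t i)) \<and>
     (\<forall>t i. \<exists>q<1. \<forall>x\<in>U. onorm (frechet_derivative (f t i) (at x)) \<le> q) \<and>
     (\<forall>t i. \<forall>x\<in>Z. \<forall>y\<in>Z. dist (f t i x) (f t i y) \<le> \<theta> * dist x y) \<and>
     (\<forall>i. \<forall>x\<in>Z. continuous_on UNIV (\<lambda>t. f t i x))"

definition locally_finite_borel :: "'o::metric_space measure \<Rightarrow> bool" where
  "locally_finite_borel \<eta> \<longleftrightarrow>
     sets \<eta> = sets borel \<and> (\<forall>t. \<exists>V. open V \<and> t \<in> V \<and> emeasure \<eta> V < \<infinity>)"

definition GTC :: "('o::metric_space \<Rightarrow> 'a \<Rightarrow> real^'n \<Rightarrow> real^'n) \<Rightarrow> (real^'n) set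
     \<Rightarrow> 'o measure \<Rightarrow> real \<Rightarrow> (real \<Rightarrow> real) \<Rightarrow> bool" where
  "GTC f Z \<eta> \<delta>0 \<psi> \<longleftrightarrow>
     0 < \<delta>0 \<and> (\<forall>\<delta>\<in>{0<..<\<delta>0}. 0 \<le> \<psi> \<delta>) \<and> (\<psi> \<longlongrightarrow> 0) (at_right 0) \<and>
     (\<forall>t0. \<forall>\<delta>\<in>{0<..<\<delta>0}. \<exists>C>0. \<forall>i j r. i \<noteq> j \<and> 0 < r \<longrightarrow>
        emeasure \<eta> {t \<in> cball t0 \<delta>. dist (coding f Z t i) (coding f Z t j) < r}
          \<le> ennreal (C * exp (real (common_len i j) * \<psi> \<delta>) * Zfun f Z t0 (common_word i j) r))"

definition inv_dist_pow :: "real \<Rightarrow> 'x::metric_space \<Rightarrow> 'x \<Rightarrow> ennreal" where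
  "inv_dist_pow s x y = (if x = y then \<infinity> else ennreal (dist x y powr (- s)))"

end

(*
  Put k = floor s, let A = D f^t0_w at Pi^t0(x) for the common word w of i and j, and let sigma be
  the (k+1)-st singular value of A, so that phi^s(A) = phi^k(A) sigma^(s-k) and
  phi^(k+1)(A) = phi^k(A) sigma.  The GTC bounds the eta-measure of the parameters t with
  |Pi^t(i) - Pi^t(j)| < r by E r^k / phi^k(A) and by E r^(k+1) / phi^(k+1)(A), where
  E = C exp(|w| psi(delta)).  Using the first bound on the dyadic shells above sigma and the second
  on those below it, the integral of |Pi^t(i) - Pi^t(j)|^(-s) is dominated by two geometric series
  (convergent because k < s < k + 1) whose sum is a constant times E / phi^s(A).  As x is arbitrary,
  the bound holds with the supremum over x.  That the singular values are well defined, nonnegative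
  and multiply to |det A| comes from the eigenvalues of A^T A being real and nonnegative.
*)

theory Submission
  imports Defs "HOL-Computational_Algebra.Fundamental_Theorem_Algebra"
begin

section \<open>Eigenvalues of the Gram matrix\<close>

lemma det_map_hom:
  fixes h :: "'a::comm_ring_1 \<Rightarrow> 'b::comm_ring_1"
  assumes add: "\<And>x y. h (x + y) = h x + h y" and mult: "\<And>x y. h (x * y) = h x * h y"
    and one: "h 1 = 1" and uminus: "\<And>x. h (- x) = - h x"
  shows "h (det A) = det (\<chi> i j. h (A $ i $ j))"
proof -
  have zero: "h 0 = 0" using add[of 0 0] by simp
  have of_int: "h (of_int k) = of_int k" for k
  proof (induction k rule: int_induct[where k=0])
    case (step2 i)
    have "h (of_int (i - 1)) = h (of_int i + - 1)" by simp
    then have "h (of_int (i - 1)) = of_int i + - 1" using step2 by (simp only: add uminus one)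
    then show ?case by simp
  qed (simp_all add: zero add one)
  have prod: "h (prod g S) = prod (h \<circ> g) S" for g and S :: "'n set"
    by (induct S rule: infinite_finite_induct) (simp_all add: one mult)
  show ?thesis
    unfolding det_def
    by (simp add: sum_comp_morphism[of h, symmetric, OF zero add] o_def mult of_int prod)
qed

lemma map_poly_of_real_add:
  "map_poly (of_real :: real \<Rightarrow> 'a::real_algebra_1) (p + q) = map_poly of_real p + map_poly of_real q"
  by (rule poly_eqI) (simp add: coeff_map_poly)

lemma map_poly_of_real_mult:
  "map_poly (of_real :: real \<Rightarrow> 'a::{real_algebra_1,comm_ring_1}) (p * q) = map_poly of_real p * map_poly of_real q"
  by (rule poly_eqI) (simp add: coeff_map_poly coeff_mult of_real_sum)

lemma map_poly_of_real_uminus: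
  "map_poly (of_real :: real \<Rightarrow> 'a::real_algebra_1) (- p) = - map_poly of_real p"
  by (rule poly_eqI) (simp add: coeff_map_poly)

definition charmat :: "real^'n^'n \<Rightarrow> real poly^'n^'n" where
  "charmat M = (\<chi> i j. (if i = j then [:0, 1:] else 0) - [:M $ i $ j:])"

lemma charpoly_mat_eq_det_charmat: "charpoly_mat M = det (charmat M)"
  unfolding charpoly_mat_def charmat_def ..

lemma degree_charmat_perm_term:
  fixes M :: "real^'n^'n"
  shows "degree (of_int (sign p) * (\<Prod>i\<in>UNIV. charmat M $ i $ p i)) \<le> card {i. p i = i}"
proof -
  have "degree (of_int (sign p) * (\<Prod>i\<in>UNIV. charmat M $ i $ p i))
      \<le> degree (of_int (sign p) :: real poly) + degree (\<Prod>i\<in>UNIV. charmat M $ i $ p i)"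
    by (rule degree_mult_le)
  also have "\<dots> \<le> (\<Sum>i\<in>UNIV. degree (charmat M $ i $ p i))"
    using degree_prod_sum_le[of UNIV "\<lambda>i. charmat M $ i $ p i"] by (simp add: o_def)
  also have "\<dots> \<le> (\<Sum>i\<in>UNIV. if p i = i then 1 else 0)"
    by (rule sum_mono) (auto simp: charmat_def degree_pCons_le)
  also have "\<dots> = card {i. p i = i}"
    by (simp add: sum.If_cases)
  finally show ?thesis .
qed

lemma charpoly_mat_monic:
  fixes M :: "real^'n^'n"
  shows "degree (charpoly_mat M) = CARD('n)" and "coeff (charpoly_mat M) CARD('n) = 1"
proof -
  let ?T = "\<lambda>p. of_int (sign p) * (\<Prod>i\<in>UNIV. charmat M $ i $ p i)"
  have "coeff (?T p) CARD('n) = 0" if "p \<noteq> id" for p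
  proof -
    from that obtain i where "p i \<noteq> i" by (metis eq_id_iff)
    then have "card {i. p i = i} < CARD('n)" by (intro psubset_card_mono) auto
    then show ?thesis using degree_charmat_perm_term[of p M] by (intro coeff_eq_0) simp
  qed
  moreover have Tid: "?T id = (\<Prod>i\<in>UNIV. [:- M $ i $ i, 1:])"
    by (simp add: charmat_def sign_id)
  ultimately have "coeff (charpoly_mat M) CARD('n) = coeff (?T id) CARD('n)"
    unfolding charpoly_mat_eq_det_charmat det_def coeff_sum
    by (subst sum.remove[of _ id]) (auto intro!: sum.neutral simp: permutes_id)
  also have "\<dots> = 1"
    unfolding Tid using lead_coeff_prod[of "\<lambda>i. [:- M $ i $ i, 1:]" UNIV]
    by (simp add: degree_prod_sum_eq)
  finally show coeff: "coeff (charpoly_mat M) CARD('n) = 1" .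
  have "degree (?T p) \<le> CARD('n)" for p
    using degree_charmat_perm_term[of p M] card_mono[of UNIV "{i. p i = i}"] by simp
  then have "degree (charpoly_mat M) \<le> CARD('n)"
    unfolding charpoly_mat_eq_det_charmat det_def by (intro degree_sum_le) auto
  moreover have "CARD('n) \<le> degree (charpoly_mat M)" using coeff by (intro le_degree) simp
  ultimately show "degree (charpoly_mat M) = CARD('n)" by simp
qed

lemma charpoly_mat_root_eigenvector:
  fixes M :: "real^'n^'n" and z :: complex
  assumes "poly (map_poly of_real (charpoly_mat M)) z = 0"
  obtains v :: "complex^'n" where "v \<noteq> 0" "\<And>i. z * v $ i = (\<Sum>j\<in>UNIV. of_real (M $ i $ j) * v $ j)"
proof -
  define h where "h q = poly (map_poly complex_of_real q) z" for q
  define B where "B = (\<chi> i j. h (charmat M $ i $ j))"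
  have B: "B $ i $ j = (if i = j then z else 0) - of_real (M $ i $ j)" for i j
    by (simp add: B_def h_def charmat_def map_poly_pCons map_poly_of_real_uminus map_poly_of_real_add)
  have "det B = h (charpoly_mat M)"
    unfolding B_def charpoly_mat_eq_det_charmat
    by (rule det_map_hom[symmetric])
      (simp_all add: h_def map_poly_of_real_add map_poly_of_real_mult map_poly_of_real_uminus)
  then have "det B = 0" using assms by (simp add: h_def)
  then obtain x y where xy: "B *v x = B *v y" "x \<noteq> y"
    using det_nz_iff_inj_gen[of "(*v) B"] unfolding inj_def by auto
  define v where "v = x - y"
  show ?thesis
  proof
    show "v \<noteq> 0" using xy by (simp add: v_def)
    fix i
    have diag: "(\<Sum>j\<in>UNIV. (if i = j then z else 0) * v $ j) = z * v $ i"
      by (simp add: if_distrib[of "\<lambda>a. a * _"] sum.delta cong: if_cong)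
    have "0 = (B *v v) $ i" using xy by (simp add: v_def matrix_vector_mult_diff_distrib)
    also have "\<dots> = z * v $ i - (\<Sum>j\<in>UNIV. of_real (M $ i $ j) * v $ j)"
      by (simp add: matrix_vector_mult_def B left_diff_distrib sum_subtractf diag)
    finally show "z * v $ i = (\<Sum>j\<in>UNIV. of_real (M $ i $ j) * v $ j)" by simp
  qed
qed

lemma gram_quadratic_form:
  fixes A :: "real^'n^'m" and v :: "complex^'n"
  defines "w \<equiv> \<lambda>l. \<Sum>j\<in>UNIV. of_real (A $ l $ j) * v $ j"
  shows "(\<Sum>i\<in>UNIV. cnj (v $ i) * (\<Sum>j\<in>UNIV. of_real ((transpose A ** A) $ i $ j) * v $ j))
       = (\<Sum>l\<in>UNIV. cnj (w l) * w l)"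
proof -
  have "(\<Sum>l\<in>UNIV. cnj (w l) * w l) = (\<Sum>l\<in>UNIV. (\<Sum>i\<in>UNIV. cnj (v $ i) * of_real (A $ l $ i)) * w l)"
    by (simp add: w_def mult.commute)
  also have "\<dots> = (\<Sum>l\<in>UNIV. \<Sum>i\<in>UNIV. \<Sum>j\<in>UNIV. cnj (v $ i) * of_real (A $ l $ i) * (of_real (A $ l $ j) * v $ j))"
    by (simp add: w_def sum_product)
  also have "\<dots> = (\<Sum>i\<in>UNIV. \<Sum>l\<in>UNIV. \<Sum>j\<in>UNIV. cnj (v $ i) * of_real (A $ l $ i) * (of_real (A $ l $ j) * v $ j))"
    by (rule sum.swap)
  also have "\<dots> = (\<Sum>i\<in>UNIV. \<Sum>j\<in>UNIV. \<Sum>l\<in>UNIV. cnj (v $ i) * of_real (A $ l $ i) * (of_real (A $ l $ j) * v $ j))"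
    by (rule sum.cong[OF refl], rule sum.swap)
  also have "\<dots> = (\<Sum>i\<in>UNIV. cnj (v $ i) * (\<Sum>j\<in>UNIV. of_real ((transpose A ** A) $ i $ j) * v $ j))"
    by (simp add: matrix_matrix_mult_def transpose_def of_real_sum sum_distrib_left sum_distrib_right mult_ac)
  finally show ?thesis ..
qed

lemma gram_eigenvalue_nonneg:
  fixes A :: "real^'n^'m" and v :: "complex^'n" and z :: complex
  assumes "v \<noteq> 0" and eig: "\<And>i. z * v $ i = (\<Sum>j\<in>UNIV. of_real ((transpose A ** A) $ i $ j) * v $ j)"
  shows "z \<in> \<real>" "0 \<le> Re z"
proof -
  define w where "w l = (\<Sum>j\<in>UNIV. of_real (A $ l $ j) * v $ j)" for l
  have cnj_mult_self: "cnj u * u = of_real (cmod u ^ 2)" for u :: complex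
    using complex_norm_square[of u] by (simp add: mult.commute)
  define N where "N = (\<Sum>i\<in>UNIV. cmod (v $ i) ^ 2)"
  define R where "R = (\<Sum>l\<in>UNIV. cmod (w l) ^ 2)"
  have "z * (\<Sum>i\<in>UNIV. cnj (v $ i) * v $ i) = (\<Sum>i\<in>UNIV. cnj (v $ i) * (z * v $ i))"
    by (simp add: sum_distrib_left mult_ac)
  also have "\<dots> = (\<Sum>l\<in>UNIV. cnj (w l) * w l)"
    unfolding eig w_def by (rule gram_quadratic_form)
  finally have "z * of_real N = of_real R"
    by (simp add: cnj_mult_self N_def R_def)
  moreover have "N > 0"
  proof -
    from \<open>v \<noteq> 0\<close> obtain i where "v $ i \<noteq> 0" by (metis vec_eq_iff zero_index)
    then show ?thesis unfolding N_def by (intro sum_pos2[where i=i]) auto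
  qed
  moreover have "R \<ge> 0" unfolding R_def by (intro sum_nonneg) simp
  ultimately have "z = of_real (R / N)" "0 \<le> R / N" by (simp_all add: field_simps)
  then show "z \<in> \<real>" "0 \<le> Re z" by simp_all
qed

lemma map_poly_of_real_prod_mset:
  "map_poly (of_real :: real \<Rightarrow> 'a::{real_algebra_1,comm_ring_1}) (\<Prod>a\<in>#R. [:- a, 1:])
     = (\<Prod>a\<in>#R. [:- of_real a, 1:])"
proof (induction R)
  case (add x R)
  have "map_poly (of_real :: real \<Rightarrow> 'a) [:- x, 1:] = [:- of_real x, 1:]"
    by (simp add: map_poly_pCons)
  then show ?case
    by (simp only: image_mset_add_mset prod_mset.add_mset map_poly_of_real_mult add.IH)
qed simp

lemma proots_prod_linear_factors: "proots (\<Prod>a\<in>#R. [:- a, 1:] :: 'a::idom poly) = R"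
proof (induction R)
  case (add x R)
  have "(\<Prod>a\<in>#R. [:- a, 1:] :: 'a poly) \<noteq> 0" by (auto simp: prod_mset_zero_iff)
  then have "proots ([:- x, 1:] * (\<Prod>a\<in>#R. [:- a, 1:])) = proots [:- x, 1:] + proots (\<Prod>a\<in>#R. [:- a, 1:])"
    by (intro proots_mult) auto
  then show ?case using add by simp
qed simp

lemma real_poly_splits:
  fixes p :: "real poly"
  assumes monic: "lead_coeff p = 1" and real_roots: "\<And>z :: complex. poly (map_poly of_real p) z = 0 \<Longrightarrow> z \<in> \<real>"
  shows "p = (\<Prod>a\<in>#proots p. [:- a, 1:])" and "size (proots p) = degree p"
proof -
  define q where "q = map_poly (of_real :: real \<Rightarrow> complex) p"
  have dq: "degree q = degree p" unfolding q_def by (simp add: degree_map_poly)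
  have lq: "lead_coeff q = 1" using monic dq unfolding q_def by (simp add: coeff_map_poly)
  define R where "R = image_mset Re (proots q)"
  have "x \<in> \<real>" if "x \<in># proots q" for x
    using that lq real_roots[of x] unfolding q_def by (cases "map_poly complex_of_real p = 0") auto
  then have "image_mset (of_real \<circ> Re) (proots q) = image_mset (\<lambda>x. x) (proots q)"
    by (intro image_mset_cong) (auto elim!: Reals_cases)
  then have imR: "image_mset of_real R = proots q"
    unfolding R_def multiset.map_comp by simp
  have mp: "map_poly of_real (\<Prod>a\<in>#R. [:- a, 1:]) = q"
    using complex_poly_decompose_multiset[of q] lq
    by (simp add: map_poly_of_real_prod_mset multiset.map_comp o_def flip: imR)
  have "coeff p n = coeff (\<Prod>a\<in>#R. [:- a, 1:]) n" for n
    using arg_cong[OF mp, of "\<lambda>r. coeff r n"] unfolding q_def by (simp add: coeff_map_poly)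
  then have peq: "p = (\<Prod>a\<in>#R. [:- a, 1:])"
    by (rule poly_eqI)
  moreover have "proots (\<Prod>a\<in>#R. [:- a, 1:]) = R"
    by (rule proots_prod_linear_factors)
  ultimately show "p = (\<Prod>a\<in>#proots p. [:- a, 1:])" by simp
  show "size (proots p) = degree p"
    using size_proots_complex[of q] dq peq \<open>proots (\<Prod>a\<in>#R. [:- a, 1:]) = R\<close>
    by (simp flip: imR)
qed

lemma poly_map_poly_of_real:
  "poly (map_poly of_real p) (of_real x) = (of_real (poly p x) :: 'a::{real_algebra_1,comm_ring_1})"
  by (induction p) (auto simp: map_poly_pCons)

lemma prod_mset_uminus: "(\<Prod>a\<in>#R. - a) = (-1) ^ size R * prod_mset (R :: 'a::comm_ring_1 multiset)"
  by (induction R) simp_all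

lemma charpoly_gram_root_real_nonneg:
  fixes A :: "real^'n^'n" and z :: complex
  assumes "poly (map_poly of_real (charpoly_mat (transpose A ** A))) z = 0"
  shows "z \<in> \<real>" "0 \<le> Re z"
proof -
  obtain v where "v \<noteq> 0" "\<And>i. z * v $ i = (\<Sum>j\<in>UNIV. of_real ((transpose A ** A) $ i $ j) * v $ j)"
    using charpoly_mat_root_eigenvector[OF assms] by blast
  then show "z \<in> \<real>" "0 \<le> Re z" by (rule gram_eigenvalue_nonneg)+
qed

lemma proots_charpoly_gram:
  fixes A :: "real^'n^'n"
  defines "p \<equiv> charpoly_mat (transpose A ** A)"
  shows "size (proots p) = CARD('n)" and "\<And>a. a \<in># proots p \<Longrightarrow> 0 \<le> a"
    and "prod_mset (proots p) = det A ^ 2"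
proof -
  have deg: "degree p = CARD('n)" and monic: "lead_coeff p = 1"
    using charpoly_mat_monic[of "transpose A ** A"] by (simp_all add: p_def)
  have split: "p = (\<Prod>a\<in>#proots p. [:- a, 1:])" and size: "size (proots p) = degree p"
    using real_poly_splits[OF monic] charpoly_gram_root_real_nonneg(1) unfolding p_def by blast+
  show "size (proots p) = CARD('n)" using size deg by simp
  show "0 \<le> a" if "a \<in># proots p" for a
  proof -
    have "poly (map_poly complex_of_real p) (of_real a) = 0"
      using that monic by (cases "p = 0") (auto simp: p_def poly_map_poly_of_real)
    then show ?thesis using charpoly_gram_root_real_nonneg(2) unfolding p_def by fastforce
  qed
  have "poly p 0 = (\<Prod>a\<in>#proots p. - a)"
    by (subst split) (simp add: poly_prod_mset)
  also have "\<dots> = (-1) ^ size (proots p) * prod_mset (proots p)"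
    using prod_mset_uminus by blast
  also have "\<dots> = (-1) ^ CARD('n) * prod_mset (proots p)"
    using \<open>size (proots p) = CARD('n)\<close> by simp
  finally have "poly p 0 = (-1) ^ CARD('n) * prod_mset (proots p)" .
  moreover have "poly p 0 = (-1) ^ CARD('n) * det A ^ 2"
  proof -
    have "poly p 0 = det (\<chi> i j. poly (charmat (transpose A ** A) $ i $ j) 0)"
      unfolding p_def charpoly_mat_eq_det_charmat by (rule det_map_hom) simp_all
    also have "(\<chi> i j. poly (charmat (transpose A ** A) $ i $ j) 0) = (\<chi> i. (-1) *s (transpose A ** A) $ i)"
      by (simp add: charmat_def vec_eq_iff)
    also have "det \<dots> = (-1) ^ CARD('n) * det (transpose A ** A)"
      using det_rows_mul[of "\<lambda>_. -1" "\<lambda>i. (transpose A ** A) $ i"] by simp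
    finally show ?thesis by (simp add: det_mul power2_eq_square)
  qed
  ultimately show "prod_mset (proots p) = det A ^ 2" by simp
qed

section \<open>Singular values and the singular value function\<close>

lemma length_singular_values: "length (singular_values (A :: real^'n^'n)) = CARD('n)"
  using proots_charpoly_gram(1)[of A]
  by (metis singular_values_def length_map length_rev mset_sorted_list_of_multiset size_mset)

lemma sv_nonneg:
  assumes "1 \<le> m" "m \<le> CARD('n)"
  shows "0 \<le> sv (A :: real^'n^'n) m"
proof -
  define L where "L = rev (sorted_list_of_multiset (proots (charpoly_mat (transpose A ** A))))"
  have "m - 1 < length L" using assms length_singular_values[of A]
    by (simp add: L_def singular_values_def)
  then have "L ! (m - 1) \<in># proots (charpoly_mat (transpose A ** A))"
    unfolding L_def by (metis nth_mem set_rev set_sorted_list_of_multiset)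
  then show ?thesis
    using proots_charpoly_gram(2) \<open>m - 1 < length L\<close> by (simp add: sv_def singular_values_def L_def)
qed

lemma prod_sv_eq_abs_det: "(\<Prod>m\<in>{1..CARD('n)}. sv A m) = \<bar>det (A :: real^'n^'n)\<bar>"
proof -
  define R where "R = proots (charpoly_mat (transpose A ** A))"
  have "(\<Prod>m\<in>{1..CARD('n)}. sv A m) = prod_list (singular_values A)"
    by (simp add: sv_def prod.list_conv_set_nth length_singular_values atLeast0LessThan
        prod.atLeast1_atMost_eq)
  also have "\<dots> = sqrt (prod_mset R)"
  proof -
    have "(\<Prod>a\<in>#M. sqrt a) = sqrt (prod_mset M)" for M
      by (induction M) (simp_all add: real_sqrt_mult)
    then show ?thesis
      by (simp add: singular_values_def R_def prod_mset_prod_list[symmetric] rev_map[symmetric])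
  qed
  also have "\<dots> = \<bar>det A\<bar>" using proots_charpoly_gram(3)[of A] by (simp add: R_def)
  finally show ?thesis .
qed

lemma svf_of_nat:
  assumes "m \<le> CARD('n)"
  shows "svf (real m) (A :: real^'n^'n) = (\<Prod>i\<in>{1..m}. sv A i)"
proof (cases "m < CARD('n)")
  case False
  then have "m = CARD('n)" using assms by simp
  then show ?thesis using prod_sv_eq_abs_det[of A] by (simp add: svf_def)
qed (simp add: svf_def)

lemma svf_of_nat_nonneg: "m \<le> CARD('n) \<Longrightarrow> 0 \<le> svf (real m) (A :: real^'n^'n)"
  by (auto simp: svf_of_nat intro!: prod_nonneg sv_nonneg)

lemma svf_of_nat_Suc:
  "k < CARD('n) \<Longrightarrow> svf (real (Suc k)) (A :: real^'n^'n) = svf (real k) A * sv A (Suc k)"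
  by (simp add: svf_of_nat del: of_nat_Suc)

lemma floor_bounds_nonint:
  fixes s :: real
  assumes "0 \<le> s" "s \<notin> \<int>"
  shows "real (nat \<lfloor>s\<rfloor>) < s" "s < real (nat \<lfloor>s\<rfloor>) + 1"
proof -
  have "real (nat \<lfloor>s\<rfloor>) = of_int \<lfloor>s\<rfloor>" using assms(1) by simp
  moreover have "of_int \<lfloor>s\<rfloor> \<noteq> s" using assms(2) by (metis Ints_of_int)
  ultimately show "real (nat \<lfloor>s\<rfloor>) < s" "s < real (nat \<lfloor>s\<rfloor>) + 1"
    by (simp_all add: order_le_neq_trans)
qed

lemma svf_nonint:
  fixes A :: "real^'n^'n"
  assumes "0 < s" "s < real CARD('n)" "s \<notin> \<int>"
  defines "k \<equiv> nat \<lfloor>s\<rfloor>"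
  shows "svf s A = svf (real k) A * sv A (Suc k) powr (s - real k)"
proof -
  have "real k < s" "s < real k + 1" using floor_bounds_nonint[of s] assms by simp_all
  then show ?thesis using assms(2) by (simp add: svf_def svf_of_nat Let_def k_def[symmetric])
qed

lemma svf_nonint_nonneg:
  assumes "0 < s" "s < real CARD('n)" "s \<notin> \<int>"
  shows "0 \<le> svf s (A :: real^'n^'n)"
proof -
  have "nat \<lfloor>s\<rfloor> < CARD('n)" using floor_bounds_nonint[of s] assms by simp
  then show ?thesis using svf_nonint[OF assms] by (simp add: svf_of_nat_nonneg)
qed

lemma Zfun_le:
  fixes f :: "'o \<Rightarrow> 'a \<Rightarrow> real^'n \<Rightarrow> real^'n"
  assumes "m \<le> CARD('n)" "0 < r"
  shows "Zfun f Z t I r \<le> r ^ m / svf (real m) (Dmat f Z t I x)"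
proof -
  let ?g = "\<lambda>x. Min ((\<lambda>k. r ^ k / svf (real k) (Dmat f Z t I x)) ` {0..CARD('n)})"
  have "0 \<le> ?g y" for y
    using assms(2) by (subst Min_ge_iff) (auto intro!: divide_nonneg_nonneg svf_of_nat_nonneg)
  then have "Zfun f Z t I r \<le> ?g x"
    unfolding Zfun_def by (intro cINF_lower bdd_belowI2[where m = 0]) auto
  also have "?g x \<le> r ^ m / svf (real m) (Dmat f Z t I x)"
    by (rule Min_le) (use assms in auto)
  finally show ?thesis .
qed

section \<open>Negative moments from sublevel-set bounds\<close>

lemma ex_power2_bracket:
  fixes x :: real
  assumes "1 \<le> x"
  obtains j :: nat where "2 ^ j \<le> x" "x < 2 ^ Suc j"
proof -
  have "\<exists>n. x < 2 ^ n" using real_arch_pow[of 2 x] by auto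
  then show ?thesis
    using exists_least_lemma[of "\<lambda>n. x < 2 ^ n"] assms that by (auto simp: not_less)
qed

lemma ex_power2_bracket':
  fixes x :: real
  assumes "1 < x"
  obtains j :: nat where "2 ^ j < x" "x \<le> 2 ^ Suc j"
proof -
  have "\<exists>n. x \<le> 2 ^ n" using real_arch_pow[of 2 x] by (auto intro: less_imp_le)
  then show ?thesis
    using exists_least_lemma[of "\<lambda>n. x \<le> 2 ^ n"] assms that by (auto simp: not_le)
qed

lemma ennreal_le_suminf: "f j \<le> (\<Sum>i. f i :: ennreal)"
  by (metis ennreal_suminf_lessD not_le order_less_irrefl)

lemma suminf_geometric_ennreal:
  assumes "0 \<le> c" "0 \<le> q" "q < 1"
  shows "(\<Sum>j. ennreal (c * q ^ j)) = ennreal (c / (1 - q))"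
proof -
  have "summable (\<lambda>j. q ^ j)" using assms by (intro summable_geometric) simp
  then have "(\<Sum>j. ennreal (c * q ^ j)) = ennreal (c * (\<Sum>j. q ^ j))"
    using assms by (subst suminf_ennreal2) (auto intro: summable_mult simp: suminf_mult)
  also have "(\<Sum>j. q ^ j) = 1 / (1 - q)" using assms by (intro suminf_geometric) simp
  finally show ?thesis by simp
qed

lemma powr_minus_mult_power: "0 < (x :: real) \<Longrightarrow> x powr (- s) * x ^ m = x powr (real m - s)"
  by (simp add: powr_add[symmetric] powr_realpow[symmetric])

lemma mult_power2_powr: "0 < (\<sigma> :: real) \<Longrightarrow> (\<sigma> * 2 ^ j) powr a = \<sigma> powr a * (2 powr a) ^ j"
  by (simp add: powr_mult powr_realpow[symmetric] powr_powr mult.commute powr_power)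

lemma divide_power2_powr:
  assumes "0 < (\<sigma> :: real)"
  shows "(\<sigma> / 2 ^ j) powr a = \<sigma> powr a * (2 powr (- a)) ^ j"
proof -
  have "(\<sigma> / 2 ^ j) powr a = \<sigma> powr a / (2 powr a) ^ j"
    using assms by (simp add: powr_divide powr_realpow[symmetric] powr_powr mult.commute powr_power)
  then show ?thesis by (simp add: powr_minus divide_inverse power_inverse)
qed

lemma suminf_ennreal_eq_top:
  fixes f :: "nat \<Rightarrow> real"
  assumes "\<And>j. c \<le> f j" "0 < c"
  shows "(\<Sum>j. ennreal (f j)) = \<infinity>"
proof (rule ccontr)
  assume "(\<Sum>j. ennreal (f j)) \<noteq> \<infinity>"
  moreover have "0 \<le> f j" for j using assms(1)[of j] assms(2) by simp
  ultimately have "summable f" by (intro summable_suminf_not_top) auto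
  then have "f \<longlonglongrightarrow> 0" by (rule summable_LIMSEQ_zero)
  then have "c \<le> 0" using assms(1) by (intro LIMSEQ_le_const) auto
  then show False using assms(2) by simp
qed

text \<open>A point with \<open>\<sigma> 2\<^sup>j \<le> d < \<sigma> 2\<^sup>j\<^sup>+\<^sup>1\<close> is charged to the first series, one with
  \<open>\<sigma> / 2\<^sup>j\<^sup>+\<^sup>1 \<le> d < \<sigma> / 2\<^sup>j\<close> to the second; for \<open>d = 0\<close> the second series diverges.\<close>
lemma inv_powr_le_dyadic_sums:
  fixes d \<sigma> s :: real
  assumes "0 \<le> d" "0 < \<sigma>" "0 < s"
  shows "(if d = 0 then \<infinity> else ennreal (d powr - s))
    \<le> (\<Sum>j. ennreal ((\<sigma> * 2 ^ j) powr - s) * indicator {..<\<sigma> * 2 ^ Suc j} d)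
      + (\<Sum>j. ennreal ((\<sigma> / 2 ^ Suc j) powr - s) * indicator {..<\<sigma> / 2 ^ j} d)"
    (is "_ \<le> ?U + ?V")
proof (cases "d = 0")
  case True
  have "(\<sigma> / 2 ^ Suc j) powr - s \<ge> \<sigma> powr - s" for j
    using assms one_le_power[of "2::real" "Suc j"] by (intro powr_mono2') (auto simp: field_simps)
  then have "(\<Sum>j. ennreal ((\<sigma> / 2 ^ Suc j) powr - s)) = \<infinity>"
    using assms by (intro suminf_ennreal_eq_top[where c = "\<sigma> powr - s"]) auto
  moreover have "?V = (\<Sum>j. ennreal ((\<sigma> / 2 ^ Suc j) powr - s))"
    using True assms by (intro suminf_cong) (simp add: indicator_def)
  ultimately show ?thesis by simp
next
  case False
  then have d: "0 < d" using assms(1) by simp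
  show ?thesis
  proof (cases "\<sigma> \<le> d")
    case True
    then obtain j where j: "2 ^ j \<le> d / \<sigma>" "d / \<sigma> < 2 ^ Suc j"
      using ex_power2_bracket[of "d / \<sigma>"] assms by auto
    then have "d powr - s \<le> (\<sigma> * 2 ^ j) powr - s"
      using assms by (intro powr_mono2') (auto simp: field_simps)
    then have "ennreal (d powr - s)
        \<le> ennreal ((\<sigma> * 2 ^ j) powr - s) * indicator {..<\<sigma> * 2 ^ Suc j} d"
      using j assms by (simp add: ennreal_leI field_simps del: power_Suc)
    also have "\<dots> \<le> ?U" by (rule ennreal_le_suminf)
    finally show ?thesis using False by (simp add: add_increasing2)
  next
    case False
    then obtain j where j: "2 ^ j < \<sigma> / d" "\<sigma> / d \<le> 2 ^ Suc j"
      using ex_power2_bracket'[of "\<sigma> / d"] d by auto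
    then have "d powr - s \<le> (\<sigma> / 2 ^ Suc j) powr - s"
      using assms d by (intro powr_mono2') (auto simp: field_simps)
    then have "ennreal (d powr - s)
        \<le> ennreal ((\<sigma> / 2 ^ Suc j) powr - s) * indicator {..<\<sigma> / 2 ^ j} d"
      using j d by (simp add: ennreal_leI field_simps del: power_Suc)
    also have "\<dots> \<le> ?V" by (rule ennreal_le_suminf)
    finally show ?thesis using \<open>d \<noteq> 0\<close> by (simp add: add_increasing)
  qed
qed

lemma dyadic_term_large:
  fixes \<sigma> s E P :: real
  assumes "0 < \<sigma>"
  shows "(\<sigma> * 2 ^ j) powr - s * (E * (\<sigma> * 2 ^ Suc j) ^ k / P)
       = E * 2 ^ k * \<sigma> powr (real k - s) / P * (2 powr (real k - s)) ^ j"
proof -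
  have "(\<sigma> * 2 ^ j) powr - s * (\<sigma> * 2 ^ j) ^ k = (\<sigma> * 2 ^ j) powr (real k - s)"
    using assms by (intro powr_minus_mult_power) simp
  also have "\<dots> = \<sigma> powr (real k - s) * (2 powr (real k - s)) ^ j"
    using assms by (rule mult_power2_powr)
  finally have "(\<sigma> * 2 ^ j) powr - s * (\<sigma> * 2 ^ j) ^ k = \<sigma> powr (real k - s) * (2 powr (real k - s)) ^ j" .
  moreover have "(\<sigma> * 2 ^ Suc j) ^ k = (\<sigma> * 2 ^ j) ^ k * 2 ^ k"
    by (simp add: power_mult_distrib)
  ultimately show ?thesis by (simp add: field_simps)
qed

lemma dyadic_term_small:
  fixes \<sigma> s E P :: real
  assumes "0 < \<sigma>"
  shows "(\<sigma> / 2 ^ Suc j) powr - s * (E * (\<sigma> / 2 ^ j) ^ Suc k / (P * \<sigma>))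
       = E * 2 powr s * \<sigma> powr (real k - s) / P * (2 powr (s - real k - 1)) ^ j"
proof -
  define y where "y = \<sigma> / 2 ^ j"
  have y: "0 < y" using assms by (simp add: y_def)
  have "y powr - s * y ^ Suc k = y powr (real (Suc k) - s)"
    using y by (rule powr_minus_mult_power)
  also have "\<dots> = \<sigma> powr (real (Suc k) - s) * (2 powr (- (real (Suc k) - s))) ^ j"
    unfolding y_def using assms by (rule divide_power2_powr)
  also have "\<sigma> powr (real (Suc k) - s) = \<sigma> powr (real k - s) * \<sigma>"
    using assms powr_add[of \<sigma> "real k - s" 1] by (simp add: algebra_simps)
  finally have key: "y powr - s * y ^ Suc k = \<sigma> powr (real k - s) * \<sigma> * (2 powr (s - real k - 1)) ^ j"
    by (simp add: algebra_simps)
  have shift: "(\<sigma> / 2 ^ Suc j) powr - s = 2 powr s * y powr - s"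
    using assms by (simp add: y_def powr_divide powr_mult powr_minus field_simps)
  have "(\<sigma> / 2 ^ Suc j) powr - s * (E * (\<sigma> / 2 ^ j) ^ Suc k / (P * \<sigma>))
      = 2 powr s * E / (P * \<sigma>) * (y powr - s * y ^ Suc k)"
    unfolding shift y_def[symmetric] by (simp add: field_simps)
  also have "\<dots> = E * 2 powr s * \<sigma> powr (real k - s) / P * (2 powr (s - real k - 1)) ^ j"
    unfolding key using assms by (simp add: field_simps)
  finally show ?thesis .
qed

definition dyadic_const :: "real \<Rightarrow> nat \<Rightarrow> real" where
  "dyadic_const s k = 2 ^ k / (1 - 2 powr (real k - s)) + 2 powr s / (1 - 2 powr (s - real k - 1))"

lemma dyadic_const_pos: "real k < s \<Longrightarrow> s < real k + 1 \<Longrightarrow> 0 < dyadic_const s k"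
  unfolding dyadic_const_def by (intro add_pos_pos divide_pos_pos) (auto intro!: powr_less_one)

lemma nn_integral_dyadic_majorant_le:
  fixes \<mu> :: "'a measure" and D :: "'a \<Rightarrow> real"
  assumes sets: "\<And>r. 0 < r \<Longrightarrow> {t \<in> B. D t < r} \<in> sets \<mu>"
    and bound: "\<And>r. 0 < r \<Longrightarrow> emeasure \<mu> {t \<in> B. D t < r} \<le> ennreal (E * r ^ k / P)"
    and bound_Suc: "\<And>r. 0 < r \<Longrightarrow> emeasure \<mu> {t \<in> B. D t < r} \<le> ennreal (E * r ^ Suc k / (P * \<sigma>))"
    and E: "0 \<le> E" and P: "0 < P" and \<sigma>: "0 < \<sigma>" and k: "real k < s" "s < real k + 1"
  shows "(\<integral>\<^sup>+ t. (\<Sum>j. ennreal ((\<sigma> * 2 ^ j) powr - s) * indicator {t \<in> B. D t < \<sigma> * 2 ^ Suc j} t)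
            + (\<Sum>j. ennreal ((\<sigma> / 2 ^ Suc j) powr - s) * indicator {t \<in> B. D t < \<sigma> / 2 ^ j} t) \<partial>\<mu>)
           \<le> ennreal (dyadic_const s k * E / (P * \<sigma> powr (s - real k)))"
proof -
  let ?U = "\<lambda>j. {t \<in> B. D t < \<sigma> * 2 ^ Suc j}" and ?V = "\<lambda>j. {t \<in> B. D t < \<sigma> / 2 ^ j}"
  let ?a = "\<lambda>j. ennreal ((\<sigma> * 2 ^ j) powr - s)" and ?b = "\<lambda>j. ennreal ((\<sigma> / 2 ^ Suc j) powr - s)"
  define q1 where "q1 = (2::real) powr (real k - s)"
  define q2 where "q2 = (2::real) powr (s - real k - 1)"
  define c1 where "c1 = E * 2 ^ k * \<sigma> powr (real k - s) / P"
  define c2 where "c2 = E * 2 powr s * \<sigma> powr (real k - s) / P"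
  have q: "0 \<le> q1" "q1 < 1" "0 \<le> q2" "q2 < 1"
    unfolding q1_def q2_def using k by (auto intro!: powr_less_one)
  have c: "0 \<le> c1" "0 \<le> c2" unfolding c1_def c2_def using E P by simp_all
  have "?U j \<in> sets \<mu>" "?V j \<in> sets \<mu>" for j using \<sigma> by (simp_all add: sets)
  then have "(\<integral>\<^sup>+ t. (\<Sum>j. ?a j * indicator (?U j) t) + (\<Sum>j. ?b j * indicator (?V j) t) \<partial>\<mu>)
      = (\<Sum>j. ?a j * emeasure \<mu> (?U j)) + (\<Sum>j. ?b j * emeasure \<mu> (?V j))"
    by (simp add: nn_integral_add nn_integral_suminf nn_integral_cmult_indicator)
  also have "\<dots> \<le> (\<Sum>j. ennreal (c1 * q1 ^ j)) + (\<Sum>j. ennreal (c2 * q2 ^ j))"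
  proof (intro add_mono suminf_le)
    fix j
    have "?a j * emeasure \<mu> (?U j) \<le> ?a j * ennreal (E * (\<sigma> * 2 ^ Suc j) ^ k / P)"
      using \<sigma> by (intro mult_left_mono bound) simp_all
    also have "\<dots> = ennreal (c1 * q1 ^ j)"
      unfolding c1_def q1_def dyadic_term_large[OF \<sigma>, symmetric] by (rule ennreal_mult'[symmetric]) simp
    finally show "?a j * emeasure \<mu> (?U j) \<le> ennreal (c1 * q1 ^ j)" .
    have "?b j * emeasure \<mu> (?V j) \<le> ?b j * ennreal (E * (\<sigma> / 2 ^ j) ^ Suc k / (P * \<sigma>))"
      using \<sigma> by (intro mult_left_mono bound_Suc) simp_all
    also have "\<dots> = ennreal (c2 * q2 ^ j)"
      unfolding c2_def q2_def dyadic_term_small[OF \<sigma>, symmetric] by (rule ennreal_mult'[symmetric]) simp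
    finally show "?b j * emeasure \<mu> (?V j) \<le> ennreal (c2 * q2 ^ j)" .
  qed auto
  also have "\<dots> = ennreal (c1 / (1 - q1)) + ennreal (c2 / (1 - q2))"
    using q c by (simp only: suminf_geometric_ennreal)
  also have "\<dots> = ennreal (c1 / (1 - q1) + c2 / (1 - q2))"
    using q c by (simp add: ennreal_plus)
  also have "c1 / (1 - q1) + c2 / (1 - q2) = E * \<sigma> powr (real k - s) / P * dyadic_const s k"
    by (simp add: c1_def c2_def q1_def q2_def dyadic_const_def distrib_left mult_ac)
  also have "\<dots> = dyadic_const s k * E / (P * \<sigma> powr (s - real k))"
    using powr_minus[of \<sigma> "s - real k"] by (simp add: field_simps)
  finally show ?thesis .
qed

text \<open>The first bound controls the dyadic shells above \<open>\<sigma>\<close>, the second those below; both resulting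
  series are geometric because \<open>k < s < k + 1\<close>.\<close>
lemma nn_integral_inv_powr_le:
  fixes \<mu> :: "'a measure" and D :: "'a \<Rightarrow> real"
  assumes D_nonneg: "\<And>t. 0 \<le> D t"
    and sets: "\<And>r. 0 < r \<Longrightarrow> {t \<in> B. D t < r} \<in> sets \<mu>"
    and bound: "\<And>r. 0 < r \<Longrightarrow> emeasure \<mu> {t \<in> B. D t < r} \<le> ennreal (E * r ^ k / P)"
    and bound_Suc: "\<And>r. 0 < r \<Longrightarrow> emeasure \<mu> {t \<in> B. D t < r} \<le> ennreal (E * r ^ Suc k / (P * \<sigma>))"
    and E: "0 \<le> E" and P: "0 < P" and \<sigma>: "0 < \<sigma>" and k: "real k < s" "s < real k + 1"
  shows "(\<integral>\<^sup>+ t \<in> B. (if D t = 0 then \<infinity> else ennreal (D t powr - s)) \<partial>\<mu>)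
           \<le> ennreal (dyadic_const s k * E / (P * \<sigma> powr (s - real k)))"
proof -
  have "(\<integral>\<^sup>+ t \<in> B. (if D t = 0 then \<infinity> else ennreal (D t powr - s)) \<partial>\<mu>)
      \<le> (\<integral>\<^sup>+ t. (\<Sum>j. ennreal ((\<sigma> * 2 ^ j) powr - s) * indicator {t \<in> B. D t < \<sigma> * 2 ^ Suc j} t)
            + (\<Sum>j. ennreal ((\<sigma> / 2 ^ Suc j) powr - s) * indicator {t \<in> B. D t < \<sigma> / 2 ^ j} t) \<partial>\<mu>)"
  proof (intro nn_integral_mono)
    fix t
    show "(if D t = 0 then \<infinity> else ennreal (D t powr - s)) * indicator B t
        \<le> (\<Sum>j. ennreal ((\<sigma> * 2 ^ j) powr - s) * indicator {t \<in> B. D t < \<sigma> * 2 ^ Suc j} t)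
          + (\<Sum>j. ennreal ((\<sigma> / 2 ^ Suc j) powr - s) * indicator {t \<in> B. D t < \<sigma> / 2 ^ j} t)"
      using inv_powr_le_dyadic_sums[OF D_nonneg \<sigma>, of s] k
      by (cases "t \<in> B") (simp_all add: indicator_def)
  qed
  also have "\<dots> \<le> ennreal (dyadic_const s k * E / (P * \<sigma> powr (s - real k)))"
    by (rule nn_integral_dyadic_majorant_le[OF sets bound bound_Suc E P \<sigma> k])
  finally show ?thesis .
qed

lemma nn_integral_inv_powr_le_svf:
  fixes \<mu> :: "'a measure" and D :: "'a \<Rightarrow> real" and A :: "real^'n^'n"
  assumes s: "0 < s" "s < real CARD('n)" "s \<notin> \<int>"
    and D_nonneg: "\<And>t. 0 \<le> D t"
    and sets: "\<And>r. 0 < r \<Longrightarrow> {t \<in> B. D t < r} \<in> sets \<mu>"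
    and bound: "\<And>r m. 0 < r \<Longrightarrow> m \<le> CARD('n) \<Longrightarrow>
      emeasure \<mu> {t \<in> B. D t < r} \<le> ennreal (E * (r ^ m / svf (real m) A))"
    and E: "0 \<le> E"
  shows "(\<integral>\<^sup>+ t \<in> B. (if D t = 0 then \<infinity> else ennreal (D t powr - s)) \<partial>\<mu>)
           \<le> ennreal (dyadic_const s (nat \<lfloor>s\<rfloor>) * E / svf s A)"
proof -
  define k where "k = nat \<lfloor>s\<rfloor>"
  define P where "P = svf (real k) A"
  define \<sigma> where "\<sigma> = sv A (Suc k)"
  have k: "real k < s" "s < real k + 1" "k < CARD('n)"
    using floor_bounds_nonint[of s] s unfolding k_def by simp_all
  have svf_s: "svf s A = P * \<sigma> powr (s - real k)"
    unfolding P_def \<sigma>_def k_def using s by (rule svf_nonint)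
  have svf_Suc: "svf (real (Suc k)) A = P * \<sigma>"
    unfolding P_def \<sigma>_def using k(3) by (rule svf_of_nat_Suc)
  have bound_k: "emeasure \<mu> {t \<in> B. D t < r} \<le> ennreal (E * r ^ k / P)"
    and bound_Suc: "emeasure \<mu> {t \<in> B. D t < r} \<le> ennreal (E * r ^ Suc k / (P * \<sigma>))" if "0 < r" for r
    using bound[OF that, of k] bound[OF that, of "Suc k"] k(3) by (simp_all add: P_def svf_Suc del: of_nat_Suc)
  show ?thesis
  proof (cases "0 < P \<and> 0 < \<sigma>")
    case True
    then show ?thesis unfolding svf_s k_def[symmetric]
      using nn_integral_inv_powr_le[OF D_nonneg sets bound_k bound_Suc E _ _ k(1,2)] by blast
  next
    case False
    \<comment> \<open>Now \<open>svf s A = 0\<close>, so the claimed bound is \<open>0\<close> (division by zero), and indeed the bound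
      for \<open>m = k + 1\<close> makes every sublevel set null.\<close>
    have "0 \<le> P" "0 \<le> \<sigma>"
      unfolding P_def \<sigma>_def using k(3) by (simp_all add: svf_of_nat_nonneg sv_nonneg)
    with False have "P * \<sigma> = 0" by auto
    then have "emeasure \<mu> {t \<in> B. D t < r} \<le> ennreal (0 * r ^ Suc k / (1 * 1))" if "0 < r" for r
      using bound_Suc[OF that, unfolded \<open>P * \<sigma> = 0\<close>] by simp
    moreover have "emeasure \<mu> {t \<in> B. D t < r} \<le> ennreal (0 * r ^ k / 1)" if "0 < r" for r
      using calculation[OF that] by simp
    ultimately have "(\<integral>\<^sup>+ t \<in> B. (if D t = 0 then \<infinity> else ennreal (D t powr - s)) \<partial>\<mu>) \<le> 0"
      using nn_integral_inv_powr_le[OF D_nonneg sets, of 0 k 1 1 s] k by simp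
    then show ?thesis by simp
  qed
qed

section \<open>Continuity of the coding map in the parameter\<close>

lemma word_map_Nil [simp]: "word_map f t [] = id"
  unfolding word_map_def by simp

lemma word_map_Cons [simp]: "word_map f t (a # w) = f t a \<circ> word_map f t w"
  unfolding word_map_def by simp

lemma word_map_append: "word_map f t (v @ w) = word_map f t v \<circ> word_map f t w"
  by (induction v) auto

lemma prefix_seq_add: "prefix_seq i (n + m) = prefix_seq i n @ map i [n..<n + m]"
proof -
  have "[0..<n + m] = [0..<n] @ [n..<n + m]" by (rule upt_add_eq_append) simp
  then show ?thesis unfolding prefix_seq_def by (simp only: map_append)
qed

locale param_contraction =
  fixes f :: "'o::metric_space \<Rightarrow> 'a \<Rightarrow> 'x::complete_space \<Rightarrow> 'x" and Z :: "'x set" and \<theta> :: real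
  assumes compact: "compact Z" and nonempty: "Z \<noteq> {}"
    and ratio: "0 \<le> \<theta>" "\<theta> < 1"
    and maps_into: "\<And>t a x. x \<in> Z \<Longrightarrow> f t a x \<in> Z"
    and contraction: "\<And>t a x y. x \<in> Z \<Longrightarrow> y \<in> Z \<Longrightarrow> dist (f t a x) (f t a y) \<le> \<theta> * dist x y"
    and continuous_param: "\<And>a x. x \<in> Z \<Longrightarrow> continuous_on UNIV (\<lambda>t. f t a x)"
begin

lemma word_map_in: "x \<in> Z \<Longrightarrow> word_map f t w x \<in> Z"
  by (induction w) (auto intro: maps_into)

lemma word_map_contraction:
  "x \<in> Z \<Longrightarrow> y \<in> Z \<Longrightarrow> dist (word_map f t w x) (word_map f t w y) \<le> \<theta> ^ length w * dist x y"
proof (induction w)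
  case (Cons a w)
  then have "dist (word_map f t (a # w) x) (word_map f t (a # w) y)
      \<le> \<theta> * dist (word_map f t w x) (word_map f t w y)"
    by (simp add: contraction word_map_in)
  also have "\<dots> \<le> \<theta> * (\<theta> ^ length w * dist x y)"
    using Cons ratio by (intro mult_left_mono) auto
  finally show ?case by simp
qed simp

lemma continuous_on_param_comp:
  assumes h: "continuous_on UNIV h" "\<And>t. h t \<in> Z"
  shows "continuous_on UNIV (\<lambda>t. f t a (h t))"
  unfolding continuous_on_iff
proof (intro ballI allI impI)
  fix t0 :: 'o and e :: real
  assume e: "0 < e"
  obtain d1 where d1: "d1 > 0" "\<And>t. dist t t0 < d1 \<Longrightarrow> dist (f t a (h t0)) (f t0 a (h t0)) < e / 2"
    using continuous_param[OF h(2)[of t0], of a] e unfolding continuous_on_iff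
    by (metis UNIV_I half_gt_zero)
  obtain d2 where d2: "d2 > 0" "\<And>t. dist t t0 < d2 \<Longrightarrow> dist (h t) (h t0) < e / 2"
    using h(1) e unfolding continuous_on_iff by (metis UNIV_I half_gt_zero)
  show "\<exists>d>0. \<forall>t\<in>UNIV. dist t t0 < d \<longrightarrow> dist (f t a (h t)) (f t0 a (h t0)) < e"
  proof (intro exI[of _ "min d1 d2"] conjI ballI impI)
    fix t assume "dist t t0 < min d1 d2"
    have "dist (f t a (h t)) (f t a (h t0)) \<le> \<theta> * dist (h t) (h t0)"
      by (rule contraction[OF h(2) h(2)])
    also have "\<dots> \<le> dist (h t) (h t0)" using ratio by (simp add: mult_left_le_one_le)
    moreover have "dist (f t a (h t0)) (f t0 a (h t0)) < e / 2" "dist (h t) (h t0) < e / 2"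
      using d1(2) d2(2) \<open>dist t t0 < min d1 d2\<close> by auto
    ultimately show "dist (f t a (h t)) (f t0 a (h t0)) < e"
      using dist_triangle[of "f t a (h t)" "f t0 a (h t0)" "f t a (h t0)"] by linarith
  qed (use d1 d2 in simp)
qed

lemma continuous_on_word_map_param: "x \<in> Z \<Longrightarrow> continuous_on UNIV (\<lambda>t. word_map f t w x)"
  by (induction w) (simp_all add: continuous_on_param_comp word_map_in)

text \<open>The approximations \<open>f\<^sup>t\<^sub>i\<^sub>|\<^sub>n(z)\<close> are uniformly Cauchy in \<open>t\<close>, with rate \<open>\<theta>\<^sup>n diam Z\<close>, so their
  limit is continuous.\<close>
lemma continuous_on_coding: "continuous_on UNIV (\<lambda>t. coding f Z t i)"
proof -
  define z where "z = (SOME z. z \<in> Z)"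
  have z: "z \<in> Z" unfolding z_def using nonempty by (simp add: some_in_eq)
  define g where "g n t = word_map f t (prefix_seq i n) z" for n t
  have bounded: "bounded Z" using compact by (rule compact_imp_bounded)
  have step: "dist (g n t) (g (n + m) t) \<le> \<theta> ^ n * diameter Z" for n m t
  proof -
    have "g (n + m) t = word_map f t (prefix_seq i n) (word_map f t (map i [n..<n + m]) z)"
      by (simp add: g_def prefix_seq_add word_map_append)
    then have "dist (g n t) (g (n + m) t) \<le> \<theta> ^ n * dist z (word_map f t (map i [n..<n + m]) z)"
      using word_map_contraction[OF z word_map_in[OF z], of t "prefix_seq i n"]
      by (simp add: g_def prefix_seq_def)
    also have "\<dots> \<le> \<theta> ^ n * diameter Z"
      using z word_map_in bounded ratio by (intro mult_left_mono diameter_bounded_bound) auto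
    finally show ?thesis .
  qed
  have "uniformly_Cauchy_on UNIV g"
  proof (rule uniformly_Cauchy_onI')
    fix e :: real assume "0 < e"
    have "(\<lambda>n. \<theta> ^ n * diameter Z) \<longlonglongrightarrow> 0"
      using ratio by (intro tendsto_mult_left_zero LIMSEQ_power_zero) simp
    from LIMSEQ_D[OF this \<open>0 < e\<close>] obtain M where M: "\<And>n. n \<ge> M \<Longrightarrow> \<bar>\<theta> ^ n * diameter Z\<bar> < e"
      by auto
    show "\<exists>M. \<forall>t\<in>UNIV. \<forall>m\<ge>M. \<forall>n>m. dist (g m t) (g n t) < e"
    proof (intro exI ballI allI impI)
      fix t m n assume "M \<le> m" "m < n"
      have "dist (g m t) (g (m + (n - m)) t) \<le> \<theta> ^ m * diameter Z" by (rule step)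
      then show "dist (g m t) (g n t) < e" using M[OF \<open>M \<le> m\<close>] \<open>m < n\<close> by simp
    qed
  qed
  then have "uniform_limit UNIV g (\<lambda>t. lim (\<lambda>n. g n t)) sequentially"
    by (simp add: Cauchy_uniformly_convergent flip: uniformly_convergent_uniform_limit_iff)
  also have "(\<lambda>t. lim (\<lambda>n. g n t)) = (\<lambda>t. coding f Z t i)"
    unfolding coding_def g_def z_def ..
  finally have limit: "uniform_limit UNIV g (\<lambda>t. coding f Z t i) sequentially" .
  have "\<forall>\<^sub>F n in sequentially. continuous_on UNIV (g n)"
    using z by (simp add: g_def continuous_on_word_map_param)
  from uniform_limit_theorem[OF this limit] show ?thesis by simp
qed

end

lemma param_C1_IFS_imp_param_contraction:
  assumes "param_C1_IFS f Z U \<theta>"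
  shows "param_contraction f Z \<theta>"
  using assms unfolding param_C1_IFS_def by unfold_locales (simp_all add: image_subset_iff)

section \<open>The energy bound along the coding map\<close>

text \<open>The supremum of an unbounded family of reals is unspecified; the hypothesis excludes this
  unless \<open>I = 0\<close>.\<close>
lemma ennreal_le_divide_SUP:
  fixes S :: "'x \<Rightarrow> real" and I :: ennreal
  assumes S_nonneg: "\<And>x. 0 \<le> S x" and le: "\<And>x. I \<le> ennreal (K / S x)"
  shows "I \<le> ennreal (K / (SUP x. S x))"
proof (cases "I = 0")
  case False
  then obtain r where r: "I = ennreal r" "0 < r"
    using le[of undefined] by (cases I) (auto simp: top_unique)
  have "r \<le> K / S x" for x
    using le[of x] r ennreal_le_iff2[of r "K / S x"] by auto
  moreover have S_pos: "0 < S x" for x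
    using \<open>r \<le> K / S x\<close> r S_nonneg[of x] by (cases "S x = 0") auto
  ultimately have S_le: "S x \<le> K / r" for x using r by (simp add: field_simps)
  then have "bdd_above (range S)" by (intro bdd_aboveI2)
  then have "0 < (SUP x. S x)" and "(SUP x. S x) \<le> K / r"
    using S_pos[of undefined] cSUP_upper[of undefined UNIV S] S_le
    by (auto intro: cSUP_least less_le_trans)
  then have "r \<le> K / (SUP x. S x)" using r by (simp add: field_simps)
  then show ?thesis using r by (simp add: ennreal_leI)
qed simp

lemma nn_integral_inv_dist_pow_coding_le:
  fixes f :: "'o::metric_space \<Rightarrow> 'a \<Rightarrow> real^'n \<Rightarrow> real^'n" and \<eta> :: "'o measure"
  assumes contraction: "param_contraction f Z \<theta>" and sets_\<eta>: "sets \<eta> = sets borel"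
    and s: "0 < s" "s < real CARD('n)" "s \<notin> \<int>" and E: "0 \<le> E"
    and bound: "\<And>r. 0 < r \<Longrightarrow>
      emeasure \<eta> {t \<in> cball t0 \<delta>. dist (coding f Z t i) (coding f Z t j) < r} \<le> ennreal (E * Zfun f Z t0 w r)"
  shows "(\<integral>\<^sup>+ t \<in> cball t0 \<delta>. inv_dist_pow s (coding f Z t i) (coding f Z t j) \<partial>\<eta>)
           \<le> ennreal (dyadic_const s (nat \<lfloor>s\<rfloor>) * E / (SUP x. svf s (Dmat f Z t0 w x)))"
proof -
  let ?D = "\<lambda>t. dist (coding f Z t i) (coding f Z t j)"
  have "continuous_on UNIV ?D"
    by (intro continuous_on_dist param_contraction.continuous_on_coding[OF contraction])
  then have "open {t. ?D t < r}" for r by (intro open_Collect_less continuous_on_const)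
  then have sets: "{t \<in> cball t0 \<delta>. ?D t < r} \<in> sets \<eta>" for r
    using sets.Int[OF borel_closed[OF closed_cball[of t0 \<delta>]] borel_open[of "{t. ?D t < r}"]]
    by (simp add: sets_\<eta> Int_def)
  have "emeasure \<eta> {t \<in> cball t0 \<delta>. ?D t < r} \<le> ennreal (E * (r ^ m / svf (real m) (Dmat f Z t0 w x)))"
    if "0 < r" "m \<le> CARD('n)" for r m x
    using bound[OF \<open>0 < r\<close>] by (rule order_trans)
      (use that E in \<open>intro ennreal_leI mult_left_mono Zfun_le, auto\<close>)
  then have "(\<integral>\<^sup>+ t \<in> cball t0 \<delta>. (if ?D t = 0 then \<infinity> else ennreal (?D t powr - s)) \<partial>\<eta>)
      \<le> ennreal (dyadic_const s (nat \<lfloor>s\<rfloor>) * E / svf s (Dmat f Z t0 w x))" for x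
    by (rule nn_integral_inv_powr_le_svf[OF s zero_le_dist sets _ E])
  then show ?thesis
    unfolding inv_dist_pow_def dist_eq_0_iff[of "coding f Z _ i", symmetric]
    by (intro ennreal_le_divide_SUP) (simp_all add: svf_nonint_nonneg s)
qed

theorem lemma3p2:
  fixes f :: "'o::metric_space \<Rightarrow> 'a::finite \<Rightarrow> real^'n \<Rightarrow> real^'n"
    and Z U :: "(real^'n) set" and \<theta> :: real
    and \<eta> :: "'o measure" and \<delta>0 :: real and \<psi> :: "real \<Rightarrow> real"
    and s :: real and t0 :: 'o and \<delta> :: real
  assumes IFS: "param_C1_IFS f Z U \<theta>"
    and meas: "locally_finite_borel \<eta>"
    and gtc: "GTC f Z \<eta> \<delta>0 \<psi>"
    and s_pos: "0 < s" and s_lt: "s < real CARD('n)" and s_nonint: "s \<notin> \<int>"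
    and delta: "0 < \<delta>" "\<delta> < \<delta>0"
  shows "\<exists>c>0. \<forall>i j :: nat \<Rightarrow> 'a. i \<noteq> j \<longrightarrow>
           (\<integral>\<^sup>+ t \<in> cball t0 \<delta>. inv_dist_pow s (coding f Z t i) (coding f Z t j) \<partial>\<eta>)
             \<le> ennreal (c * exp (real (common_len i j) * \<psi> \<delta>)
                  / (SUP x\<in>UNIV. svf s (Dmat f Z t0 (common_word i j) x)))"
proof -
  obtain C where "C > 0" and C: "\<And>i j r. i \<noteq> j \<Longrightarrow> 0 < r \<Longrightarrow>
      emeasure \<eta> {t \<in> cball t0 \<delta>. dist (coding f Z t i) (coding f Z t j) < r}
        \<le> ennreal (C * exp (real (common_len i j) * \<psi> \<delta>) * Zfun f Z t0 (common_word i j) r)"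
    using gtc delta unfolding GTC_def by fastforce
  have contraction: "param_contraction f Z \<theta>" using IFS by (rule param_C1_IFS_imp_param_contraction)
  have sets_\<eta>: "sets \<eta> = sets borel" using meas unfolding locally_finite_borel_def by simp
  have "0 < dyadic_const s (nat \<lfloor>s\<rfloor>)"
    using floor_bounds_nonint[of s] s_pos s_nonint by (intro dyadic_const_pos) simp_all
  moreover have "(\<integral>\<^sup>+ t \<in> cball t0 \<delta>. inv_dist_pow s (coding f Z t i) (coding f Z t j) \<partial>\<eta>)
      \<le> ennreal (dyadic_const s (nat \<lfloor>s\<rfloor>) * C * exp (real (common_len i j) * \<psi> \<delta>)
           / (SUP x. svf s (Dmat f Z t0 (common_word i j) x)))" if "i \<noteq> j" for i j
    using nn_integral_inv_dist_pow_coding_le[OF contraction sets_\<eta> s_pos s_lt s_nonint _ C[OF that]]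
      \<open>C > 0\<close> by (simp add: mult.assoc)
  ultimately show ?thesis using \<open>C > 0\<close> by (intro exI[of _ "dyadic_const s (nat \<lfloor>s\<rfloor>) * C"]) auto
qed

end
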